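(* Let $(P,\leq,{}',0,1)$ be an orthogonal lub-complete poset and $x,y,z\in P$. Then the following hold: (i) $x\rightarrow_K y\approx x\vee y'\vee \mathrm{Max}\,L(x',y)$ if $x\leq y$; $x\rightarrow_K y\approx y\vee \mathrm{Max}\,L(x',y')$ if $x\perp y$; $x\rightarrow_K y\approx x'\vee (x\wedge \mathrm{Min}\,U(x',y))$ if $y\leq x$; (ii) $x\rightarrow_K 1\approx x\vee x'$, $1\rightarrow_K x\approx x$; (iii) $x\rightarrow_K 0\approx x'$, $0\rightarrow_K x\approx x\vee x'$.
   Context: $(P,\leq,{}',0,1)$ is a bounded poset with an antitone involution ${}'$ ($x\leq y\Rightarrow y'\leq x'$, $x''=x$); $x\perp y$ means $x\leq y'$; orthogonal means $x\perp y$ implies the supremum $x\vee y$ exists; lub-complete means for every lower bound $x$ of a finite subset $M$ there is a maximal lower bound of $M$ above $x$. For $A\subseteq P$, $L(A)$ and $U(A)$ are the sets of lower and upper bounds, $L(x,y)=L(\{x,y\})$ etc.; $\mathrm{Max}\,A$ and $\mathrm{Min}\,A$ are the sets of maximal and minimal elements of $A$. For $y\in P$, $A,B\subseteq P$, $y\vee A=\{y\vee a\mid a\in A\}$, $A\vee B=\{a\vee b\mid a\in A,b\in B\}$ (when all these joins exist), similarly for $\wedge$. The Kalmbach implication is $x\rightarrow_K y:=\mathrm{Max}\,L(x',y)\vee \mathrm{Max}\,L(x',y')\vee (x\wedge \mathrm{Min}\,U(x',y))$, which is well defined in such a poset. Singletons are identified with elements. *)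

theory Defs
  imports Main
begin

text \<open>Bounded poset: a type of class bounded_order (0 = bot, 1 = top).
  The involution is an explicit function c (written x' in the paper).\<close>

definition antitone_involution :: "('a::order \<Rightarrow> 'a) \<Rightarrow> bool" where
  "antitone_involution c \<longleftrightarrow> (\<forall>x y. x \<le> y \<longrightarrow> c y \<le> c x) \<and> (\<forall>x. c (c x) = x)"

definition perp :: "('a::order \<Rightarrow> 'a) \<Rightarrow> 'a \<Rightarrow> 'a \<Rightarrow> bool" where
  "perp c x y \<longleftrightarrow> x \<le> c y"

definition LB :: "'a::order set \<Rightarrow> 'a set" where
  "LB A = {x. \<forall>a\<in>A. x \<le> a}"

definition UB :: "'a::order set \<Rightarrow> 'a set" where
  "UB A = {x. \<forall>a\<in>A. a \<le> x}"

definition MaxS :: "'a::order set \<Rightarrow> 'a set" where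
  "MaxS A = {x\<in>A. \<forall>y\<in>A. x \<le> y \<longrightarrow> y = x}"

definition MinS :: "'a::order set \<Rightarrow> 'a set" where
  "MinS A = {x\<in>A. \<forall>y\<in>A. y \<le> x \<longrightarrow> y = x}"

definition is_lub :: "'a::order set \<Rightarrow> 'a \<Rightarrow> bool" where
  "is_lub A z \<longleftrightarrow> z \<in> UB A \<and> (\<forall>w\<in>UB A. z \<le> w)"

definition is_glb :: "'a::order set \<Rightarrow> 'a \<Rightarrow> bool" where
  "is_glb A z \<longleftrightarrow> z \<in> LB A \<and> (\<forall>w\<in>LB A. w \<le> z)"

definition orthogonal :: "('a::order \<Rightarrow> 'a) \<Rightarrow> bool" where
  "orthogonal c \<longleftrightarrow> (\<forall>x y. perp c x y \<longrightarrow> (\<exists>z. is_lub {x, y} z))"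

definition lub_complete :: "'a::order itself \<Rightarrow> bool" where
  "lub_complete _ \<longleftrightarrow> (\<forall>M::'a set. finite M \<longrightarrow> (\<forall>x\<in>LB M. \<exists>m\<in>MaxS (LB M). x \<le> m))"

definition join_set :: "'a::order set \<Rightarrow> 'a set \<Rightarrow> 'a set" where
  "join_set A B = {z. \<exists>a\<in>A. \<exists>b\<in>B. is_lub {a, b} z}"

definition meet_set :: "'a::order set \<Rightarrow> 'a set \<Rightarrow> 'a set" where
  "meet_set A B = {z. \<exists>a\<in>A. \<exists>b\<in>B. is_glb {a, b} z}"

definition kimp :: "('a::order \<Rightarrow> 'a) \<Rightarrow> 'a \<Rightarrow> 'a \<Rightarrow> 'a set" where
  "kimp c x y = join_set (join_set (MaxS (LB {c x, y})) (MaxS (LB {c x, c y})))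
                         (meet_set {x} (MinS (UB {c x, y})))"

end

theory Submission
  imports Defs
begin

text \<open>For comparable elements the maximal lower bound, the minimal upper bound, the join and
  the meet are singletons, so in each case of (i) the defining expression of \<open>x \<rightarrow>K y\<close>
  collapses. If \<open>x \<le> y\<close>, both iterated joins consist of the joins of \<open>{a, y', x}\<close> with
  \<open>a \<in> Max L(x', y)\<close>, which exist by orthogonality. If \<open>x \<perp> y\<close>, the meet \<open>x \<and> x'\<close> lies
  below every \<open>b \<in> Max L(x', y')\<close>: their join exists by orthogonality and is again a lower
  bound of \<open>x'\<close> and \<open>y'\<close>, so by maximality it is \<open>b\<close>. Parts (ii) and (iii) are instances
  of (i), using \<open>1' = 0\<close>.\<close>

lemma antitone_involution_twice:
  "antitone_involution c \<Longrightarrow> c (c x) = x"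
  unfolding antitone_involution_def by blast

lemma antitone_involution_le_iff:
  "antitone_involution c \<Longrightarrow> c x \<le> c y \<longleftrightarrow> y \<le> x"
  unfolding antitone_involution_def by metis

lemma antitone_involution_le_swap:
  "antitone_involution c \<Longrightarrow> x \<le> c y \<longleftrightarrow> y \<le> c x"
  unfolding antitone_involution_def by metis

lemma antitone_involution_top:
  assumes "antitone_involution (c :: 'a::{order_bot,order_top} \<Rightarrow> 'a)"
  shows "c top = bot"
proof -
  have "c top \<le> c (c bot)"
    using antitone_involution_le_iff[OF assms] by simp
  then show ?thesis by (simp add: antitone_involution_twice[OF assms] bot_unique)
qed

lemma antitone_involution_bot:
  assumes "antitone_involution (c :: 'a::{order_bot,order_top} \<Rightarrow> 'a)"
  shows "c bot = top"
  using antitone_involution_top[OF assms] antitone_involution_twice[OF assms] by metis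

lemma antitone_involution_lub_glb:
  assumes ai: "antitone_involution c" and "is_lub {a, b} w"
  shows "is_glb {c a, c b} (c w)"
proof -
  have "a \<le> w" "b \<le> w" and least: "\<And>u. a \<le> u \<Longrightarrow> b \<le> u \<Longrightarrow> w \<le> u"
    using \<open>is_lub {a, b} w\<close> unfolding is_lub_def UB_def by auto
  have "l \<le> c w" if "l \<le> c a" "l \<le> c b" for l
    using least[of "c l"] that by (simp add: antitone_involution_le_swap[OF ai])
  then show ?thesis
    using \<open>a \<le> w\<close> \<open>b \<le> w\<close> unfolding is_glb_def LB_def
    by (auto simp: antitone_involution_le_iff[OF ai])
qed

lemma is_glb_unique: "is_glb A u \<Longrightarrow> is_glb A v \<Longrightarrow> u = v"
  unfolding is_glb_def by (auto intro: order.antisym)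

lemma is_lub_pair_of_le: "a \<le> b \<Longrightarrow> is_lub {a, b} z \<longleftrightarrow> z = b"
  unfolding is_lub_def UB_def by (auto intro: order.antisym)

lemma is_lub_pair_of_ge: "b \<le> a \<Longrightarrow> is_lub {a, b} z \<longleftrightarrow> z = a"
  unfolding is_lub_def UB_def by (auto intro: order.antisym)

lemma is_glb_pair_of_le: "a \<le> b \<Longrightarrow> is_glb {a, b} z \<longleftrightarrow> z = a"
  unfolding is_glb_def LB_def by (auto intro: order.antisym)

lemma is_lub_insert_lub:
  "is_lub {a, b} w \<Longrightarrow> is_lub {w, d} z \<longleftrightarrow> is_lub {a, b, d} z"
  unfolding is_lub_def UB_def by (auto intro: order.trans)

lemma MaxS_LB_pair_of_le: "a \<le> b \<Longrightarrow> MaxS (LB {a, b}) = {a}"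
  unfolding MaxS_def LB_def by (auto intro: order.antisym)

lemma MaxS_LB_pair_of_ge: "b \<le> a \<Longrightarrow> MaxS (LB {a, b}) = {b}"
  unfolding MaxS_def LB_def by (auto intro: order.antisym)

lemma MinS_UB_pair_of_le: "a \<le> b \<Longrightarrow> MinS (UB {a, b}) = {b}"
  unfolding MinS_def UB_def by (auto intro: order.antisym)

lemma MinS_UB_pair_of_ge: "b \<le> a \<Longrightarrow> MinS (UB {a, b}) = {a}"
  unfolding MinS_def UB_def by (auto intro: order.antisym)

lemma join_set_commute: "join_set A B = join_set B A"
  unfolding join_set_def by (auto; metis insert_commute)

lemma meet_set_commute: "meet_set A B = meet_set B A"
  unfolding meet_set_def by (auto; metis insert_commute)

lemma meet_set_singletons: "is_glb {a, b} w \<Longrightarrow> meet_set {a} {b} = {w}"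
  unfolding meet_set_def using is_glb_unique by auto

lemma join_set_absorb:
  "A \<noteq> {} \<Longrightarrow> (\<And>a. a \<in> A \<Longrightarrow> a \<le> b) \<Longrightarrow> join_set A {b} = {b}"
  unfolding join_set_def by (auto simp: is_lub_pair_of_le)

lemma join_set_lower_unit:
  "(\<And>a. a \<in> A \<Longrightarrow> b \<le> a) \<Longrightarrow> join_set A {b} = A"
  unfolding join_set_def by (auto simp: is_lub_pair_of_ge)

lemma join_set_bot: "join_set A {bot :: 'a::order_bot} = A"
  by (rule join_set_lower_unit) simp

lemma bot_join_set: "join_set {bot :: 'a::order_bot} A = A"
  by (simp add: join_set_commute join_set_bot)

lemma meet_set_absorb:
  "B \<noteq> {} \<Longrightarrow> (\<And>b. b \<in> B \<Longrightarrow> a \<le> b) \<Longrightarrow> meet_set {a} B = {a}"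
  unfolding meet_set_def by (auto simp: is_glb_pair_of_le)

lemma join_set_join_set:
  assumes "\<And>a b. a \<in> A \<Longrightarrow> b \<in> B \<Longrightarrow> \<exists>w. is_lub {a, b} w"
  shows "join_set (join_set A B) C = {z. \<exists>a\<in>A. \<exists>b\<in>B. \<exists>d\<in>C. is_lub {a, b, d} z}"
  unfolding join_set_def using assms is_lub_insert_lub by blast

lemma MaxS_LB_pair_nonempty:
  assumes "lub_complete TYPE('a::order_bot)"
  shows "MaxS (LB {a, b :: 'a}) \<noteq> {}"
proof -
  have "bot \<in> LB {a, b}" unfolding LB_def by simp
  moreover have "finite {a, b}" by simp
  ultimately have "\<exists>m\<in>MaxS (LB {a, b}). bot \<le> m"
    using assms unfolding lub_complete_def by blast
  then show ?thesis by blast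
qed

lemma MinS_UB_pair_nonempty:
  fixes c :: "'a::order_bot \<Rightarrow> 'a" and a b :: 'a
  assumes "antitone_involution c" and "lub_complete TYPE('a)"
  shows "MinS (UB {a, b}) \<noteq> {}"
proof -
  note swap = antitone_involution_le_swap[OF assms(1)]
  obtain m where "m \<in> MaxS (LB {c a, c b})"
    using MaxS_LB_pair_nonempty[OF assms(2)] by blast
  then have "m \<le> c a" "m \<le> c b"
    and max: "\<And>l. l \<le> c a \<Longrightarrow> l \<le> c b \<Longrightarrow> m \<le> l \<Longrightarrow> l = m"
    unfolding MaxS_def LB_def by auto
  have "u = c m" if "a \<le> u" "b \<le> u" "u \<le> c m" for u
  proof -
    have "c u \<le> c a" "c u \<le> c b"
      using that(1,2) antitone_involution_le_iff[OF assms(1)] by blast+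
    moreover have "m \<le> c u" using that(3) swap[of m u] by blast
    ultimately have "c u = m" by (rule max)
    then show ?thesis using antitone_involution_twice[OF assms(1)] by metis
  qed
  moreover have "a \<le> c m" "b \<le> c m"
    using \<open>m \<le> c a\<close> \<open>m \<le> c b\<close> swap[of a m] swap[of b m] by blast+
  ultimately have "c m \<in> MinS (UB {a, b})"
    unfolding MinS_def UB_def by auto
  then show ?thesis by blast
qed

lemma orthogonal_lub_exists: "orthogonal c \<Longrightarrow> a \<le> c b \<Longrightarrow> \<exists>w. is_lub {a, b} w"
  unfolding orthogonal_def perp_def by blast

lemma orthogonal_glb_compl_exists:
  assumes "antitone_involution c" and "orthogonal c"
  shows "\<exists>d. is_glb {x, c x} d"
proof -
  obtain w where "is_lub {c x, x} w"
    using orthogonal_lub_exists[OF assms(2), of "c x" x] by blast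
  then have "is_glb {c (c x), c x} (c w)"
    by (rule antitone_involution_lub_glb[OF assms(1)])
  then show ?thesis by (auto simp: antitone_involution_twice[OF assms(1)])
qed

lemma orthogonal_le_MaxS_LB:
  assumes "orthogonal c" and "b \<in> MaxS (LB S)" and "d \<in> LB S" and "d \<le> c b"
  shows "d \<le> b"
proof -
  obtain e where e: "is_lub {d, b} e"
    using orthogonal_lub_exists[OF assms(1,4)] by blast
  have "e \<in> LB S"
    using e assms(2,3) unfolding is_lub_def UB_def LB_def MaxS_def by auto
  moreover have "b \<le> e" "d \<le> e"
    using e unfolding is_lub_def UB_def by auto
  ultimately show ?thesis
    using assms(2) unfolding MaxS_def by auto
qed

lemma kimp_of_le:
  fixes c :: "'a::order_bot \<Rightarrow> 'a"
  assumes ai: "antitone_involution c" and "orthogonal c" and "lub_complete TYPE('a)"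
    and "x \<le> y"
  shows "kimp c x y = join_set (join_set {x} {c y}) (MaxS (LB {c x, y}))"
proof -
  define M where "M = MaxS (LB {c x, y})"
  have lub_c_y: "\<exists>w. is_lub {a, c y} w" if "a \<le> y" for a
    using that orthogonal_lub_exists[OF assms(2)] antitone_involution_twice[OF ai] by simp
  have "MaxS (LB {c x, c y}) = {c y}"
    using \<open>x \<le> y\<close> by (simp add: MaxS_LB_pair_of_ge antitone_involution_le_iff[OF ai])
  moreover have "meet_set {x} (MinS (UB {c x, y})) = {x}"
    using \<open>x \<le> y\<close> MinS_UB_pair_nonempty[OF ai assms(3)]
    by (intro meet_set_absorb) (auto simp: MinS_def UB_def intro: order.trans)
  ultimately have "kimp c x y = join_set (join_set M {c y}) {x}"
    unfolding kimp_def M_def by simp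
  also have "\<dots> = {z. \<exists>a\<in>M. is_lub {a, c y, x} z}"
    using lub_c_y by (subst join_set_join_set) (auto simp: M_def MaxS_def LB_def)
  also have "\<dots> = join_set (join_set {x} {c y}) M"
  proof -
    have "is_lub {a, c y, x} = is_lub {x, c y, a}" for a
      by (simp add: insert_commute)
    then show ?thesis
      using lub_c_y \<open>x \<le> y\<close> by (subst join_set_join_set) simp_all
  qed
  finally show ?thesis unfolding M_def .
qed

lemma kimp_of_perp:
  assumes ai: "antitone_involution c" and orth: "orthogonal c" and "perp c x y"
  shows "kimp c x y = join_set {y} (MaxS (LB {c x, c y}))"
proof -
  have "x \<le> c y" and "y \<le> c x"
    using \<open>perp c x y\<close> antitone_involution_le_swap[OF ai] unfolding perp_def by auto
  obtain d where d: "is_glb {x, c x} d"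
    using orthogonal_glb_compl_exists[OF ai orth] by blast
  have "d \<le> x" "d \<le> c x" using d unfolding is_glb_def LB_def by auto
  have "meet_set {x} (MinS (UB {c x, y})) = {d}"
    using \<open>y \<le> c x\<close> by (simp add: MinS_UB_pair_of_ge meet_set_singletons[OF d])
  then have "kimp c x y = join_set (join_set {y} (MaxS (LB {c x, c y}))) {d}"
    using \<open>y \<le> c x\<close> unfolding kimp_def by (simp add: MaxS_LB_pair_of_ge)
  also have "\<dots> = join_set {y} (MaxS (LB {c x, c y}))"
  proof (rule join_set_lower_unit)
    fix w assume "w \<in> join_set {y} (MaxS (LB {c x, c y}))"
    then obtain b where b: "b \<in> MaxS (LB {c x, c y})" and w: "is_lub {y, b} w"
      unfolding join_set_def by blast
    have "b \<le> c x" using b unfolding MaxS_def LB_def by auto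
    then have "x \<le> c b" using antitone_involution_le_swap[OF ai] by blast
    with \<open>d \<le> x\<close> have "d \<le> c b" by (rule order.trans)
    moreover have "d \<in> LB {c x, c y}"
      using \<open>d \<le> x\<close> \<open>d \<le> c x\<close> \<open>x \<le> c y\<close> unfolding LB_def by (auto intro: order.trans)
    ultimately have "d \<le> b" using orthogonal_le_MaxS_LB[OF orth b] by blast
    then show "d \<le> w" using w unfolding is_lub_def UB_def by (auto intro: order.trans)
  qed
  finally show ?thesis .
qed

lemma kimp_of_ge:
  fixes c :: "'a::order_bot \<Rightarrow> 'a"
  assumes ai: "antitone_involution c" and "lub_complete TYPE('a)" and "y \<le> x"
  shows "kimp c x y = join_set {c x} (meet_set {x} (MinS (UB {c x, y})))"
proof -
  have "MaxS (LB {c x, c y}) = {c x}"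
    using \<open>y \<le> x\<close> by (simp add: MaxS_LB_pair_of_le antitone_involution_le_iff[OF ai])
  moreover have "join_set (MaxS (LB {c x, y})) {c x} = {c x}"
    using MaxS_LB_pair_nonempty[OF assms(2)]
    by (intro join_set_absorb) (auto simp: MaxS_def LB_def)
  ultimately show ?thesis unfolding kimp_def by simp
qed

lemma kimp_top_right:
  fixes c :: "'a::{order_bot,order_top} \<Rightarrow> 'a"
  assumes ai: "antitone_involution c" and "orthogonal c" and "lub_complete TYPE('a)"
  shows "kimp c x top = join_set {x} {c x}"
  using kimp_of_le[OF assms top.extremum]
  by (simp add: antitone_involution_top[OF ai] join_set_bot MaxS_LB_pair_of_le)

lemma kimp_top_left:
  fixes c :: "'a::{order_bot,order_top} \<Rightarrow> 'a"
  assumes ai: "antitone_involution c" and "lub_complete TYPE('a)"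
  shows "kimp c top x = {x}"
proof -
  have "meet_set {top} {x} = {x}"
    by (subst meet_set_commute) (rule meet_set_absorb; simp)
  then show ?thesis
    using kimp_of_ge[OF assms top.extremum]
    by (simp add: antitone_involution_top[OF ai] bot_join_set MinS_UB_pair_of_le)
qed

lemma kimp_bot_right:
  fixes c :: "'a::{order_bot,order_top} \<Rightarrow> 'a"
  assumes ai: "antitone_involution c" and "orthogonal c"
  shows "kimp c x bot = {c x}"
proof -
  have "perp c x bot" unfolding perp_def antitone_involution_bot[OF ai] by simp
  then show ?thesis
    using kimp_of_perp[OF assms]
    by (simp add: antitone_involution_bot[OF ai] bot_join_set MaxS_LB_pair_of_le)
qed

lemma kimp_bot_left:
  fixes c :: "'a::{order_bot,order_top} \<Rightarrow> 'a"
  assumes ai: "antitone_involution c" and "orthogonal c" and "lub_complete TYPE('a)"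
  shows "kimp c bot x = join_set {x} {c x}"
  using kimp_of_le[OF assms bot.extremum]
  by (simp add: antitone_involution_bot[OF ai] bot_join_set MaxS_LB_pair_of_ge join_set_commute)

theorem proposition4:
  fixes c :: "'a::{order_bot,order_top} \<Rightarrow> 'a" and x y z :: 'a
  assumes "antitone_involution c" and "orthogonal c" and "lub_complete TYPE('a)"
  shows "(x \<le> y \<longrightarrow> kimp c x y = join_set (join_set {x} {c y}) (MaxS (LB {c x, y})))
       \<and> (perp c x y \<longrightarrow> kimp c x y = join_set {y} (MaxS (LB {c x, c y})))
       \<and> (y \<le> x \<longrightarrow> kimp c x y = join_set {c x} (meet_set {x} (MinS (UB {c x, y}))))
       \<and> kimp c x top = join_set {x} {c x} \<and> kimp c top x = {x}
       \<and> kimp c x bot = {c x} \<and> kimp c bot x = join_set {x} {c x}"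
  by (intro conjI impI kimp_of_le kimp_of_perp kimp_of_ge kimp_top_right kimp_top_left
      kimp_bot_right kimp_bot_left assms)

end
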